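(* Let $(\vdash,\overline{\cdot},\widehat{\cdot})$ be a setting satisfying Pre-Relevance, let $\mathcal{S},\mathcal{S}'\subseteq\mathcal{L}$ with $\mathcal{S}\mid\mathcal{S}'$, let $\mathcal{E}_1$ be a complete extension of $\mathcal{AF}_{\vdash}(\mathcal{S})$, $\mathcal{E}_2$ a complete extension of $\mathcal{AF}_{\vdash}(\mathcal{S}')$, and $\mathcal{E}=\mathsf{Defended}(\mathcal{E}_1\cup\mathcal{E}_2,\mathcal{AF}_{\vdash}(\mathcal{S}\cup\mathcal{S}'))$. Then (1) $\mathcal{E}\cap\mathit{Arg}_{\vdash}(\mathcal{S})=\mathcal{E}_1$ and $\mathcal{E}\cap\mathit{Arg}_{\vdash}(\mathcal{S}')=\mathcal{E}_2$, and (2) $\mathcal{E}$ is a complete extension of $\mathcal{AF}_{\vdash}(\mathcal{S}\cup\mathcal{S}')$.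
   Context: $\mathcal{L}$ is the set of formulas of a language built from propositional atoms; $\mathsf{Atoms}(\mathcal{S})$ is the set of atoms occurring in $\mathcal{S}$, and $\mathcal{S}_1\mid\mathcal{S}_2$ means $\mathsf{Atoms}(\mathcal{S}_1)\cap\mathsf{Atoms}(\mathcal{S}_2)=\emptyset$. A setting is $(\vdash,\overline{\cdot},\widehat{\cdot})$ with ${\vdash}\subseteq\wp_{\sf fin}(\mathcal{L})\times\mathcal{L}$ arbitrary, $\overline{\cdot}:\mathcal{L}\to\wp(\mathcal{L})$, $\widehat{\cdot}$ assigning to each nonempty finite set a finite set of formulas, with $\widehat{\emptyset}=\emptyset$. $\mathit{Arg}_{\vdash}(\mathcal{S})=\{(\Gamma,\gamma):\Gamma\subseteq\mathcal{S}\text{ finite},\Gamma\vdash\gamma\}$; $\mathcal{AF}_{\vdash}(\mathcal{S})$ is the attack graph on it where $(\Gamma,\gamma)$ attacks $(\Gamma',\gamma')$ iff $\gamma\in\overline{\phi}$ for some $\phi\in\widehat{\Gamma'}$. $\mathcal{A}$ defends $a$ iff every attacker of $a$ in the framework is attacked by a member of $\mathcal{A}$; $\mathsf{Defended}(\mathcal{A},\mathcal{AF}_{\vdash}(\mathcal{S}))$ is the set of arguments of $\mathit{Arg}_{\vdash}(\mathcal{S})$ defended by $\mathcal{A}$. Complete = conflict-free, defends all its members, and contains every argument it defends. Pre-Relevance of the setting: (a) for all $\mathcal{S}_1,\mathcal{S}_2,\phi$ with $\mathcal{S}_1\cup\{\phi\}\mid\mathcal{S}_2$, $\mathcal{S}_1\cup\mathcal{S}_2\vdash\phi$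 implies $\mathcal{S}_1'\vdash\phi$ for some $\mathcal{S}_1'\subseteq\mathcal{S}_1$; (b) primeness: for all sets of atoms $\mathcal{A}_1\mid\mathcal{A}_2$, all finite $\mathcal{S}_1,\mathcal{T}_1,\mathcal{S}_2,\mathcal{T}_2$ with $\mathsf{Atoms}(\mathcal{S}_i),\mathsf{Atoms}(\mathcal{T}_i)\subseteq\mathcal{A}_i$, and all $\phi,\psi$ with $\psi\in\overline{\phi}$, $\phi\in\widehat{\mathcal{T}_1\cup\mathcal{T}_2}$: if $\mathcal{S}_1\cup\mathcal{S}_2\vdash\psi$ then there are $i\in\{1,2\}$, $\mathcal{S}_i'\subseteq\mathcal{S}_i$, $\phi_i\in\widehat{\mathcal{T}_i}$, $\psi_i\in\overline{\phi_i}$ with $\mathcal{S}_i'\vdash\psi_i$; (c) $\widehat{\Delta}\subseteq\widehat{\Delta\cup\Delta'}$ for all finite $\Delta,\Delta'$. *)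

theory Defs
  imports Main
begin

text \<open>A setting is given by vd (the relation |-), ctr (the contrariness operator
  overline) and hat (the hat operator).\<close>

definition Atoms :: "('f \<Rightarrow> 'a set) \<Rightarrow> 'f set \<Rightarrow> 'a set" where
  "Atoms atoms S = (\<Union>x\<in>S. atoms x)"

definition indep :: "('f \<Rightarrow> 'a set) \<Rightarrow> 'f set \<Rightarrow> 'f set \<Rightarrow> bool" where
  "indep atoms S1 S2 \<longleftrightarrow> Atoms atoms S1 \<inter> Atoms atoms S2 = {}"

definition setting :: "('f set \<Rightarrow> 'f \<Rightarrow> bool) \<Rightarrow> ('f \<Rightarrow> 'f set) \<Rightarrow> ('f set \<Rightarrow> 'f set) \<Rightarrow> bool" where
  "setting vd ctr hat \<longleftrightarrow>
     (\<forall>\<Gamma> \<gamma>. vd \<Gamma> \<gamma> \<longrightarrow> finite \<Gamma>) \<and>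
     (\<forall>\<Delta>. finite \<Delta> \<longrightarrow> finite (hat \<Delta>)) \<and>
     hat {} = {}"

definition pre_relevance ::
  "('f \<Rightarrow> 'a set) \<Rightarrow> ('f set \<Rightarrow> 'f \<Rightarrow> bool) \<Rightarrow> ('f \<Rightarrow> 'f set) \<Rightarrow> ('f set \<Rightarrow> 'f set) \<Rightarrow> bool" where
  "pre_relevance atoms vd ctr hat \<longleftrightarrow>
     \<comment> \<open>(a)\<close>
     (\<forall>S1 S2 \<phi>. indep atoms (S1 \<union> {\<phi>}) S2 \<longrightarrow> vd (S1 \<union> S2) \<phi> \<longrightarrow>
        (\<exists>S1'. S1' \<subseteq> S1 \<and> vd S1' \<phi>)) \<and>
     \<comment> \<open>(b) primeness\<close>
     (\<forall>A1 A2 S1 T1 S2 T2 \<phi> \<psi>.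
        A1 \<inter> A2 = {} \<longrightarrow>
        finite S1 \<longrightarrow> finite T1 \<longrightarrow> finite S2 \<longrightarrow> finite T2 \<longrightarrow>
        Atoms atoms S1 \<subseteq> A1 \<longrightarrow> Atoms atoms T1 \<subseteq> A1 \<longrightarrow>
        Atoms atoms S2 \<subseteq> A2 \<longrightarrow> Atoms atoms T2 \<subseteq> A2 \<longrightarrow>
        \<psi> \<in> ctr \<phi> \<longrightarrow> \<phi> \<in> hat (T1 \<union> T2) \<longrightarrow> vd (S1 \<union> S2) \<psi> \<longrightarrow>
        (\<exists>S1' \<phi>1 \<psi>1. S1' \<subseteq> S1 \<and> \<phi>1 \<in> hat T1 \<and> \<psi>1 \<in> ctr \<phi>1 \<and> vd S1' \<psi>1) \<or>
        (\<exists>S2' \<phi>2 \<psi>2. S2' \<subseteq> S2 \<and> \<phi>2 \<in> hat T2 \<and> \<psi>2 \<in> ctr \<phi>2 \<and> vd S2' \<psi>2)) \<and>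
     \<comment> \<open>(c)\<close>
     (\<forall>\<Delta> \<Delta>'. finite \<Delta> \<longrightarrow> finite \<Delta>' \<longrightarrow> hat \<Delta> \<subseteq> hat (\<Delta> \<union> \<Delta>'))"

type_synonym 'f arg = "'f set \<times> 'f"

definition Arg :: "('f set \<Rightarrow> 'f \<Rightarrow> bool) \<Rightarrow> 'f set \<Rightarrow> 'f arg set" where
  "Arg vd S = {(\<Gamma>, \<gamma>). \<Gamma> \<subseteq> S \<and> finite \<Gamma> \<and> vd \<Gamma> \<gamma>}"

definition attacks :: "('f \<Rightarrow> 'f set) \<Rightarrow> ('f set \<Rightarrow> 'f set) \<Rightarrow> 'f arg \<Rightarrow> 'f arg \<Rightarrow> bool" where
  "attacks ctr hat a b \<longleftrightarrow> (\<exists>\<phi>\<in>hat (fst b). snd a \<in> ctr \<phi>)"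

text \<open>Notions relative to the framework AF(S) = (Arg S, attacks).\<close>
definition defends ::
  "('f set \<Rightarrow> 'f \<Rightarrow> bool) \<Rightarrow> ('f \<Rightarrow> 'f set) \<Rightarrow> ('f set \<Rightarrow> 'f set) \<Rightarrow> 'f set \<Rightarrow> 'f arg set \<Rightarrow> 'f arg \<Rightarrow> bool" where
  "defends vd ctr hat S E a \<longleftrightarrow>
     (\<forall>b\<in>Arg vd S. attacks ctr hat b a \<longrightarrow> (\<exists>c\<in>E. attacks ctr hat c b))"

definition Defended ::
  "('f set \<Rightarrow> 'f \<Rightarrow> bool) \<Rightarrow> ('f \<Rightarrow> 'f set) \<Rightarrow> ('f set \<Rightarrow> 'f set) \<Rightarrow> 'f set \<Rightarrow> 'f arg set \<Rightarrow> 'f arg set" where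
  "Defended vd ctr hat S E = {a \<in> Arg vd S. defends vd ctr hat S E a}"

definition conflict_free :: "('f \<Rightarrow> 'f set) \<Rightarrow> ('f set \<Rightarrow> 'f set) \<Rightarrow> 'f arg set \<Rightarrow> bool" where
  "conflict_free ctr hat E \<longleftrightarrow> (\<forall>a\<in>E. \<forall>b\<in>E. \<not> attacks ctr hat a b)"

definition complete_ext ::
  "('f set \<Rightarrow> 'f \<Rightarrow> bool) \<Rightarrow> ('f \<Rightarrow> 'f set) \<Rightarrow> ('f set \<Rightarrow> 'f set) \<Rightarrow> 'f set \<Rightarrow> 'f arg set \<Rightarrow> bool" where
  "complete_ext vd ctr hat S E \<longleftrightarrow>
     E \<subseteq> Arg vd S \<and> conflict_free ctr hat E \<and>
     (\<forall>a\<in>E. defends vd ctr hat S E a) \<and>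
     (\<forall>a\<in>Arg vd S. defends vd ctr hat S E a \<longrightarrow> a \<in> E)"

end

theory Submission
  imports Defs
begin

text \<open>Primeness traces an attack on an argument over S \<union> S' back to a sub-argument over S or
  over S' attacking the corresponding part of the target.  Used with the attacker's premises on
  one side and the target's on the other, it shows that an argument over S' attacks an argument
  over S only if some premise-free argument ({}, \<psi>) does; such arguments are unattackable, as
  the hat of {} is empty, so they lie in every complete extension.  Hence attacks across the
  split are always answered within E1 resp. E2: E1 \<union> E2 is conflict-free, every attack by a
  member of E is matched by one from E1 \<union> E2, and the part of E over S is exactly E1.\<close>

lemma defends_mono:
  "A \<subseteq> B \<Longrightarrow> defends vd ctr hat U A a \<Longrightarrow> defends vd ctr hat U B a"
  unfolding defends_def by blast

lemma conflict_free_Defended: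
  assumes "A \<subseteq> Arg vd U" and "conflict_free ctr hat A"
  shows "conflict_free ctr hat (Defended vd ctr hat U A)"
  unfolding conflict_free_def
proof (intro ballI notI)
  fix a b
  assume a: "a \<in> Defended vd ctr hat U A" and b: "b \<in> Defended vd ctr hat U A"
    and "attacks ctr hat a b"
  then obtain c where c: "c \<in> A" "attacks ctr hat c a"
    by (auto simp: Defended_def defends_def)
  then obtain d where "d \<in> A" "attacks ctr hat d c"
    using a assms(1) by (auto simp: Defended_def defends_def)
  with c assms(2) show False
    unfolding conflict_free_def by blast
qed

lemma complete_ext_Defended:
  assumes sub: "A \<subseteq> Defended vd ctr hat U A"
    and cf: "conflict_free ctr hat A"
    and witnessed: "\<And>c b. c \<in> Defended vd ctr hat U A \<Longrightarrow> b \<in> Arg vd U \<Longrightarrow>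
      attacks ctr hat c b \<Longrightarrow> \<exists>e\<in>A. attacks ctr hat e b"
  shows "complete_ext vd ctr hat U (Defended vd ctr hat U A)"
proof -
  let ?E = "Defended vd ctr hat U A"
  have "A \<subseteq> Arg vd U"
    using sub by (auto simp: Defended_def)
  then have "conflict_free ctr hat ?E"
    using cf by (rule conflict_free_Defended)
  moreover have "defends vd ctr hat U ?E a" if "a \<in> ?E" for a
    using that sub defends_mono[of A ?E] unfolding Defended_def by blast
  moreover have "a \<in> ?E" if a: "a \<in> Arg vd U" and "defends vd ctr hat U ?E a" for a
  proof -
    have "defends vd ctr hat U A a"
      using that witnessed unfolding defends_def by meson
    with a show ?thesis
      unfolding Defended_def by simp
  qed
  moreover have "?E \<subseteq> Arg vd U"
    unfolding Defended_def by blast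
  ultimately show ?thesis
    unfolding complete_ext_def by blast
qed

lemma Atoms_mono: "A \<subseteq> B \<Longrightarrow> Atoms atoms A \<subseteq> Atoms atoms B"
  unfolding Atoms_def by auto

lemma indep_sym: "indep atoms S S' \<Longrightarrow> indep atoms S' S"
  unfolding indep_def by auto

lemma indep_mono: "indep atoms S S' \<Longrightarrow> A \<subseteq> S \<Longrightarrow> B \<subseteq> S' \<Longrightarrow> indep atoms A B"
  unfolding indep_def using Atoms_mono[of A S atoms] Atoms_mono[of B S' atoms] by blast

lemma Arg_mono: "S \<subseteq> T \<Longrightarrow> Arg vd S \<subseteq> Arg vd T"
  unfolding Arg_def by auto

locale pre_relevant_setting =
  fixes atoms :: "'f \<Rightarrow> 'a set"
    and vd :: "'f set \<Rightarrow> 'f \<Rightarrow> bool"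
    and ctr :: "'f \<Rightarrow> 'f set"
    and hat :: "'f set \<Rightarrow> 'f set"
  assumes setting: "setting vd ctr hat"
    and pre_relevance: "pre_relevance atoms vd ctr hat"
begin

lemma finite_premises: "vd \<Gamma> \<gamma> \<Longrightarrow> finite \<Gamma>"
  using setting unfolding setting_def by blast

lemma hat_empty: "hat {} = {}"
  using setting unfolding setting_def by blast

lemma hat_mono:
  assumes "finite B" and "A \<subseteq> B"
  shows "hat A \<subseteq> hat B"
proof -
  have "finite A"
    using assms by (rule finite_subset[rotated])
  then have "hat A \<subseteq> hat (A \<union> B)"
    using assms(1)
    by (rule pre_relevance[unfolded pre_relevance_def, THEN conjunct2, THEN conjunct2, rule_format])
  with assms(2) show ?thesis
    by (simp add: sup_absorb2)
qed

lemma attacks_premise_mono: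
  assumes "finite (fst b)" and "fst a \<subseteq> fst b" and "attacks ctr hat c a"
  shows "attacks ctr hat c b"
  using assms(3) hat_mono[OF assms(1,2)] unfolding attacks_def by blast

lemma attack_prime:
  assumes "indep atoms (\<Gamma>1 \<union> \<Delta>1) (\<Gamma>2 \<union> \<Delta>2)"
    and "finite \<Delta>1" "finite \<Delta>2"
    and "vd (\<Gamma>1 \<union> \<Gamma>2) \<psi>" and "attacks ctr hat (\<Gamma>1 \<union> \<Gamma>2, \<psi>) (\<Delta>1 \<union> \<Delta>2, \<delta>)"
  shows "(\<exists>\<Gamma>' \<psi>'. \<Gamma>' \<subseteq> \<Gamma>1 \<and> vd \<Gamma>' \<psi>' \<and> attacks ctr hat (\<Gamma>', \<psi>') (\<Delta>1, \<delta>)) \<or>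
         (\<exists>\<Gamma>' \<psi>'. \<Gamma>' \<subseteq> \<Gamma>2 \<and> vd \<Gamma>' \<psi>' \<and> attacks ctr hat (\<Gamma>', \<psi>') (\<Delta>2, \<delta>))"
proof -
  obtain \<phi> where "\<phi> \<in> hat (\<Delta>1 \<union> \<Delta>2)" "\<psi> \<in> ctr \<phi>"
    using assms(5) unfolding attacks_def by auto
  moreover have "finite \<Gamma>1" "finite \<Gamma>2"
    using finite_premises[OF assms(4)] by auto
  ultimately have "(\<exists>\<Gamma>' \<phi>1 \<psi>1. \<Gamma>' \<subseteq> \<Gamma>1 \<and> \<phi>1 \<in> hat \<Delta>1 \<and> \<psi>1 \<in> ctr \<phi>1 \<and> vd \<Gamma>' \<psi>1) \<or>
      (\<exists>\<Gamma>' \<phi>2 \<psi>2. \<Gamma>' \<subseteq> \<Gamma>2 \<and> \<phi>2 \<in> hat \<Delta>2 \<and> \<psi>2 \<in> ctr \<phi>2 \<and> vd \<Gamma>' \<psi>2)"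
    using assms(1-4)
    by (intro pre_relevance[unfolded pre_relevance_def, THEN conjunct2, THEN conjunct1, rule_format,
        of "Atoms atoms (\<Gamma>1 \<union> \<Delta>1)" "Atoms atoms (\<Gamma>2 \<union> \<Delta>2)"])
      (simp_all add: indep_def Atoms_mono)
  then show ?thesis
    unfolding attacks_def by auto
qed

lemma empty_premises_in_complete_ext:
  assumes "complete_ext vd ctr hat S E" and "vd {} \<psi>"
  shows "({}, \<psi>) \<in> E"
proof -
  have "defends vd ctr hat S E ({}, \<psi>)"
    unfolding defends_def attacks_def by (simp add: hat_empty)
  moreover have "({}, \<psi>) \<in> Arg vd S"
    using assms(2) unfolding Arg_def by simp
  ultimately show ?thesis
    using assms(1) unfolding complete_ext_def by blast
qed

lemma independent_attack_imp_complete_ext_attacks: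
  assumes ind: "indep atoms S S'" and E: "complete_ext vd ctr hat S E"
    and d: "d \<in> Arg vd S" and e: "e \<in> Arg vd S'" and att: "attacks ctr hat e d"
  shows "\<exists>c\<in>E. attacks ctr hat c d"
proof -
  obtain \<Delta> \<delta> \<Gamma> \<gamma> where de: "d = (\<Delta>, \<delta>)" "e = (\<Gamma>, \<gamma>)"
    by fastforce
  have "indep atoms ({} \<union> \<Delta>) (\<Gamma> \<union> {})"
    using ind d e de by (auto simp: Arg_def intro: indep_mono)
  moreover have "finite \<Delta>" "vd ({} \<union> \<Gamma>) \<gamma>" "attacks ctr hat ({} \<union> \<Gamma>, \<gamma>) ({} \<union> \<Delta>, \<delta>)"
    using d e att de by (auto simp: Arg_def)
  ultimately have "(\<exists>\<Gamma>' \<psi>'. \<Gamma>' \<subseteq> {} \<and> vd \<Gamma>' \<psi>' \<and> attacks ctr hat (\<Gamma>', \<psi>') (\<Delta>, \<delta>)) \<or>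
      (\<exists>\<Gamma>' \<psi>'. \<Gamma>' \<subseteq> \<Gamma> \<and> vd \<Gamma>' \<psi>' \<and> attacks ctr hat (\<Gamma>', \<psi>') ({}, \<delta>))"
    using attack_prime[of "{}" \<Delta> \<Gamma> "{}"] by simp
  then obtain \<psi>' where "vd {} \<psi>'" "attacks ctr hat ({}, \<psi>') d"
    using de by (auto simp: attacks_def hat_empty)
  then show ?thesis
    using empty_premises_in_complete_ext[OF E] by blast
qed

lemma complete_ext_not_attacked_by_independent:
  assumes "indep atoms S S'" and E: "complete_ext vd ctr hat S E"
    and a: "a \<in> E" and "e \<in> Arg vd S'"
  shows "\<not> attacks ctr hat e a"
proof
  assume "attacks ctr hat e a"
  moreover have "a \<in> Arg vd S"
    using E a unfolding complete_ext_def by blast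
  ultimately obtain c where "c \<in> E" "attacks ctr hat c a"
    using independent_attack_imp_complete_ext_attacks assms by blast
  with E a show False
    unfolding complete_ext_def conflict_free_def by blast
qed

lemma attack_by_sub_argument:
  assumes ind: "indep atoms S S'"
    and c: "c \<in> Arg vd (S \<union> S')" and b: "b \<in> Arg vd (S \<union> S')" and att: "attacks ctr hat c b"
  shows "\<exists>c' \<in> Arg vd S \<union> Arg vd S'. fst c' \<subseteq> fst c \<and> attacks ctr hat c' b"
proof -
  obtain \<Gamma> \<gamma> \<Delta> \<delta> where cb: "c = (\<Gamma>, \<gamma>)" "b = (\<Delta>, \<delta>)"
    by fastforce
  have \<Gamma>: "\<Gamma> \<inter> S \<union> \<Gamma> \<inter> S' = \<Gamma>" and \<Delta>: "\<Delta> \<inter> S \<union> \<Delta> \<inter> S' = \<Delta>" and "finite \<Delta>"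
    using c b cb unfolding Arg_def by auto
  have "indep atoms (\<Gamma> \<inter> S \<union> \<Delta> \<inter> S) (\<Gamma> \<inter> S' \<union> \<Delta> \<inter> S')"
    using ind by (rule indep_mono) auto
  moreover have "finite (\<Delta> \<inter> S)" "finite (\<Delta> \<inter> S')"
    using \<open>finite \<Delta>\<close> by auto
  moreover have "vd (\<Gamma> \<inter> S \<union> \<Gamma> \<inter> S') \<gamma>"
    using c cb \<Gamma> unfolding Arg_def by auto
  moreover have "attacks ctr hat (\<Gamma> \<inter> S \<union> \<Gamma> \<inter> S', \<gamma>) (\<Delta> \<inter> S \<union> \<Delta> \<inter> S', \<delta>)"
    using att cb \<Gamma> \<Delta> by simp
  ultimately have "(\<exists>\<Gamma>' \<psi>'. \<Gamma>' \<subseteq> \<Gamma> \<inter> S \<and> vd \<Gamma>' \<psi>' \<and> attacks ctr hat (\<Gamma>', \<psi>') (\<Delta> \<inter> S, \<delta>)) \<or>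
      (\<exists>\<Gamma>' \<psi>'. \<Gamma>' \<subseteq> \<Gamma> \<inter> S' \<and> vd \<Gamma>' \<psi>' \<and> attacks ctr hat (\<Gamma>', \<psi>') (\<Delta> \<inter> S', \<delta>))"
    by (rule attack_prime)
  moreover have "\<exists>c' \<in> Arg vd T. fst c' \<subseteq> fst c \<and> attacks ctr hat c' b"
    if "\<Gamma>' \<subseteq> \<Gamma> \<inter> T" "vd \<Gamma>' \<psi>'" "attacks ctr hat (\<Gamma>', \<psi>') (\<Delta> \<inter> T, \<delta>)" for T \<Gamma>' \<psi>'
  proof -
    have "attacks ctr hat (\<Gamma>', \<psi>') b"
      using attacks_premise_mono[of b "(\<Delta> \<inter> T, \<delta>)"] that(3) \<open>finite \<Delta>\<close> cb by auto
    with that show ?thesis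
      using finite_premises cb by (intro bexI[of _ "(\<Gamma>', \<psi>')"]) (auto simp: Arg_def)
  qed
  ultimately show ?thesis
    by blast
qed

lemma sub_argument_of_Defended_in_complete_ext:
  assumes ind: "indep atoms S S'" and E1: "complete_ext vd ctr hat S E1"
    and E2: "E2 \<subseteq> Arg vd S'"
    and c: "c \<in> Defended vd ctr hat (S \<union> S') (E1 \<union> E2)"
    and a: "a \<in> Arg vd S" and sub: "fst a \<subseteq> fst c"
  shows "a \<in> E1"
proof -
  have "defends vd ctr hat S E1 a"
    unfolding defends_def
  proof (intro ballI impI)
    fix d
    assume d: "d \<in> Arg vd S" and "attacks ctr hat d a"
    moreover have "finite (fst c)"
      using c unfolding Defended_def Arg_def by auto
    ultimately have "attacks ctr hat d c"
      using sub attacks_premise_mono by blast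
    moreover have "d \<in> Arg vd (S \<union> S')"
      using d Arg_mono[of S "S \<union> S'"] by blast
    ultimately obtain e where "e \<in> E1 \<union> E2" "attacks ctr hat e d"
      using c unfolding Defended_def defends_def by blast
    then show "\<exists>e\<in>E1. attacks ctr hat e d"
      using independent_attack_imp_complete_ext_attacks[OF ind E1 d] E2 by blast
  qed
  with a E1 show ?thesis
    unfolding complete_ext_def by blast
qed

lemma Defended_Un_Int_Arg:
  assumes ind: "indep atoms S S'" and E1: "complete_ext vd ctr hat S E1"
    and E2: "E2 \<subseteq> Arg vd S'"
  shows "Defended vd ctr hat (S \<union> S') (E1 \<union> E2) \<inter> Arg vd S = E1"
proof (intro equalityI subsetI)
  fix a
  assume "a \<in> Defended vd ctr hat (S \<union> S') (E1 \<union> E2) \<inter> Arg vd S"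
  then show "a \<in> E1"
    using sub_argument_of_Defended_in_complete_ext[OF ind E1 E2, of a a] by blast
next
  fix a
  assume a: "a \<in> E1"
  then have aS: "a \<in> Arg vd S"
    using E1 unfolding complete_ext_def by blast
  then have aU: "a \<in> Arg vd (S \<union> S')"
    using Arg_mono[of S "S \<union> S'"] by blast
  have "defends vd ctr hat (S \<union> S') (E1 \<union> E2) a"
    unfolding defends_def
  proof (intro ballI impI)
    fix b
    assume b: "b \<in> Arg vd (S \<union> S')" and "attacks ctr hat b a"
    then obtain c where c: "c \<in> Arg vd S \<union> Arg vd S'" "fst c \<subseteq> fst b" "attacks ctr hat c a"
      using attack_by_sub_argument[OF ind b aU] by blast
    then have "c \<in> Arg vd S"
      using complete_ext_not_attacked_by_independent[OF ind E1 a] by blast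
    then obtain e where "e \<in> E1" "attacks ctr hat e c"
      using E1 a c(3) unfolding complete_ext_def defends_def by blast
    moreover have "finite (fst b)"
      using b unfolding Arg_def by auto
    ultimately show "\<exists>e\<in>E1 \<union> E2. attacks ctr hat e b"
      using c(2) attacks_premise_mono by blast
  qed
  with aS aU show "a \<in> Defended vd ctr hat (S \<union> S') (E1 \<union> E2) \<inter> Arg vd S"
    unfolding Defended_def by blast
qed

lemma Defended_Un_attack_witnessed:
  assumes ind: "indep atoms S S'"
    and E1: "complete_ext vd ctr hat S E1" and E2: "complete_ext vd ctr hat S' E2"
    and c: "c \<in> Defended vd ctr hat (S \<union> S') (E1 \<union> E2)"
    and b: "b \<in> Arg vd (S \<union> S')" and att: "attacks ctr hat c b"
  shows "\<exists>e\<in>E1 \<union> E2. attacks ctr hat e b"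
proof -
  have "c \<in> Arg vd (S \<union> S')"
    using c unfolding Defended_def by blast
  then obtain c' where c': "c' \<in> Arg vd S \<union> Arg vd S'" "fst c' \<subseteq> fst c" "attacks ctr hat c' b"
    using attack_by_sub_argument[OF ind _ b att] by blast
  have E1_Arg: "E1 \<subseteq> Arg vd S" and E2_Arg: "E2 \<subseteq> Arg vd S'"
    using E1 E2 unfolding complete_ext_def by blast+
  from c'(1) consider "c' \<in> Arg vd S" | "c' \<in> Arg vd S'"
    by blast
  then have "c' \<in> E1 \<union> E2"
  proof cases
    case 1
    then show ?thesis
      using sub_argument_of_Defended_in_complete_ext[OF ind E1 E2_Arg c 1 c'(2)] by blast
  next
    case 2
    have "c \<in> Defended vd ctr hat (S' \<union> S) (E2 \<union> E1)"
      using c by (simp add: Un_commute)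
    then show ?thesis
      using sub_argument_of_Defended_in_complete_ext[OF indep_sym[OF ind] E2 E1_Arg _ 2 c'(2)]
      by blast
  qed
  with c'(3) show ?thesis
    by blast
qed

lemma conflict_free_Un_complete_ext:
  assumes ind: "indep atoms S S'"
    and E1: "complete_ext vd ctr hat S E1" and E2: "complete_ext vd ctr hat S' E2"
  shows "conflict_free ctr hat (E1 \<union> E2)"
proof -
  have "E1 \<subseteq> Arg vd S" "E2 \<subseteq> Arg vd S'"
    and "conflict_free ctr hat E1" "conflict_free ctr hat E2"
    using E1 E2 unfolding complete_ext_def by blast+
  then show ?thesis
    using complete_ext_not_attacked_by_independent[OF ind E1]
      complete_ext_not_attacked_by_independent[OF indep_sym[OF ind] E2]
    unfolding conflict_free_def by blast
qed

end

theorem lemma6: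
  fixes atoms :: "'f \<Rightarrow> 'a set"
    and vd :: "'f set \<Rightarrow> 'f \<Rightarrow> bool"
    and ctr :: "'f \<Rightarrow> 'f set"
    and hat :: "'f set \<Rightarrow> 'f set"
    and S S' :: "'f set"
    and E1 E2 E :: "'f arg set"
  assumes "setting vd ctr hat"
    and "pre_relevance atoms vd ctr hat"
    and "indep atoms S S'"
    and "complete_ext vd ctr hat S E1"
    and "complete_ext vd ctr hat S' E2"
    and "E = Defended vd ctr hat (S \<union> S') (E1 \<union> E2)"
  shows "E \<inter> Arg vd S = E1 \<and> E \<inter> Arg vd S' = E2 \<and> complete_ext vd ctr hat (S \<union> S') E"
proof -
  interpret pre_relevant_setting atoms vd ctr hat
    using assms(1,2) by unfold_locales
  note ind = assms(3) and E1 = assms(4) and E2 = assms(5)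
  have E1_Arg: "E1 \<subseteq> Arg vd S" and E2_Arg: "E2 \<subseteq> Arg vd S'"
    using E1 E2 unfolding complete_ext_def by blast+
  have E1_part: "E \<inter> Arg vd S = E1"
    using Defended_Un_Int_Arg[OF ind E1 E2_Arg] assms(6) by simp
  have E2_part: "E \<inter> Arg vd S' = E2"
    using Defended_Un_Int_Arg[OF indep_sym[OF ind] E2 E1_Arg] assms(6) by (simp add: Un_commute)
  have "complete_ext vd ctr hat (S \<union> S') E"
    unfolding assms(6)
  proof (rule complete_ext_Defended)
    show "E1 \<union> E2 \<subseteq> Defended vd ctr hat (S \<union> S') (E1 \<union> E2)"
      using E1_part E2_part assms(6) by blast
    show "conflict_free ctr hat (E1 \<union> E2)"
      using ind E1 E2 by (rule conflict_free_Un_complete_ext)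
  qed (rule Defended_Un_attack_witnessed[OF ind E1 E2])
  with E1_part E2_part show ?thesis
    by blast
qed

end
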